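(* Assume the standing setup (equivariant system $f$ with state symmetry $\phi$, input symmetry $\psi$, and equivariant lift $\Lambda$). Let $u:[0,\infty)\to\mathbb{L}$ be an input signal and $\xi(t)$ a trajectory of $\dot\xi=f_{u(t)}(\xi)$. Fix $\mathring{\xi}\in\mathcal{M}$ and let $\Delta:[0,\infty)\to\mathfrak{g}$ be any (sufficiently regular) signal. Let $\hat X(t)\in\mathcal{G}$ solve $$\dot{\hat X} = \mathrm{D}L_{\hat X}\,\Lambda(\phi(\hat X,\mathring{\xi}),u) + \mathrm{D}R_{\hat X}\,\Delta,\qquad \hat X(0)=\mathrm{id}.$$ Define the global state error $e:=\phi(\hat X^{-1},\xi)\in\mathcal{M}$ and the origin velocity $\mathring{u}:=\psi(\hat X^{-1},u)\in\mathbb{L}$. Then $$\dot e = \mathrm{D}_{E}\big|_{\mathrm{id}}\phi(E,e)\,\big[\Lambda(e,\mathring{u})-\Lambda(\mathring{\xi},\mathring{u})-\Delta\big],$$ so that the dynamics of $e$ depend only on $e$, $\mathring{u}$ and $\Delta$.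
   Context: Standing setup. $\mathcal{G}$ is a Lie group with identity $\mathrm{id}$ and Lie algebra $\mathfrak{g}$ (identified with $T_{\mathrm{id}}\mathcal{G}$). $L_X(Y)=XY$, $R_X(Y)=YX$; $\mathrm{D}L_X,\mathrm{D}R_X$ applied to elements of $\mathfrak{g}$ denote the differentials at $\mathrm{id}$. $\mathrm{Ad}_X[U]:=\mathrm{D}L_X\cdot\mathrm{D}R_{X^{-1}}[U]$. A right action $\phi:\mathcal{G}\times\mathcal{M}\to\mathcal{M}$ satisfies $\phi(Y,\phi(X,\xi))=\phi(XY,\xi)$, $\phi(\mathrm{id},\xi)=\xi$; partial maps are $\phi_X(\xi)=\phi(X,\xi)$ and $\phi_\xi(X)=\phi(X,\xi)$. $\mathcal{M}$ is a smooth $m$-dimensional manifold on which $\phi$ is a smooth transitive right action. $\mathbb{L}$ is a real vector space (input space) and $f:\mathbb{L}\to\mathfrak{X}(\mathcal{M})$, $u\mapsto f_u$, is an affine system function $f_u=f_0+\sum_i u_if_i$. The system is equivariant: there is a smooth right action $\psi:\mathcal{G}\times\mathbb{L}\to\mathbb{L}$ with $\mathrm{D}\phi_X\, f_u(\xi)=f_{\psi_X(u)}(\phi_X(\xi))$ for all $u,\xi,X$. A lift is a smooth map $\Lambda:\mathcal{M}\times\mathbb{L}\to\mathfrak{g}$ with $\mathrm{D}_X|_{\mathrm{id}}\phi_\xi(X)[\Lambda(\xi,u)]=f_u(\xi)$ for all $\xi,u$; it is equivariant if $\Lambda(\phi(X,\xi),\psi(X,u))=\mathrm{Ad}_{X^{-1}}\Lambda(\xi,u)$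 for all $X,\xi,u$. Signals are assumed regular enough that all ODEs have unique solutions for all time. *)

theory Defs
  imports "HOL-Analysis.Analysis"
begin

text \<open>Model: every smooth manifold is realised as an embedded submanifold of a Euclidean
space (Whitney); smooth maps between such (closed) submanifolds are given by smooth maps
of the ambient spaces.  Differentials are Frechet derivatives of these ambient maps,
applied only to tangent vectors, where they do not depend on the chosen extension.\<close>

fun iter_pd :: "'a::euclidean_space list \<Rightarrow> ('a \<Rightarrow> 'b::real_normed_vector) \<Rightarrow> 'a \<Rightarrow> 'b" where
  "iter_pd [] f = f"
| "iter_pd (v # vs) f = (\<lambda>x. frechet_derivative (iter_pd vs f) (at x) v)"

definition smooth_on :: "'a::euclidean_space set \<Rightarrow> ('a \<Rightarrow> 'b::real_normed_vector) \<Rightarrow> bool" where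
  "smooth_on U f \<longleftrightarrow> (\<forall>vs. set vs \<subseteq> Basis \<longrightarrow>
      (\<forall>x\<in>U. iter_pd vs f differentiable (at x)) \<and> continuous_on U (iter_pd vs f))"

abbreviation smooth :: "('a::euclidean_space \<Rightarrow> 'b::real_normed_vector) \<Rightarrow> bool" where
  "smooth f \<equiv> smooth_on UNIV f"

definition embedded_submanifold :: "nat \<Rightarrow> 'a::euclidean_space set \<Rightarrow> bool" where
  "embedded_submanifold d S \<longleftrightarrow> (\<forall>x\<in>S. \<exists>U V (\<psi>::'a \<Rightarrow> 'a) \<psi>' L.
      open U \<and> x \<in> U \<and> open V \<and> \<psi> ` U = V \<and>
      (\<forall>y\<in>U. \<psi>' (\<psi> y) = y) \<and> (\<forall>z\<in>V. \<psi> (\<psi>' z) = z) \<and>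
      smooth_on U \<psi> \<and> smooth_on V \<psi>' \<and>
      subspace L \<and> dim L = d \<and> \<psi> ` (U \<inter> S) = V \<inter> L)"

definition tangent_space :: "'a::real_normed_vector set \<Rightarrow> 'a \<Rightarrow> 'a set" where
  "tangent_space S x = {v. \<exists>\<gamma>::real \<Rightarrow> 'a. (\<forall>t. \<gamma> t \<in> S) \<and> \<gamma> 0 = x \<and>
                             (\<gamma> has_vector_derivative v) (at 0)}"

definition lie_group :: "'g::euclidean_space set \<Rightarrow> ('g \<Rightarrow> 'g \<Rightarrow> 'g) \<Rightarrow> ('g \<Rightarrow> 'g) \<Rightarrow> 'g \<Rightarrow> bool" where
  "lie_group G mul ginv e \<longleftrightarrow>
     (\<exists>d. embedded_submanifold d G) \<and> e \<in> G \<and>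
     (\<forall>X\<in>G. \<forall>Y\<in>G. mul X Y \<in> G) \<and> (\<forall>X\<in>G. ginv X \<in> G) \<and>
     (\<forall>X\<in>G. \<forall>Y\<in>G. \<forall>Z\<in>G. mul (mul X Y) Z = mul X (mul Y Z)) \<and>
     (\<forall>X\<in>G. mul e X = X \<and> mul X e = X) \<and>
     (\<forall>X\<in>G. mul X (ginv X) = e \<and> mul (ginv X) X = e) \<and>
     smooth (\<lambda>p. mul (fst p) (snd p)) \<and> smooth ginv"

definition lie_algebra :: "'g::euclidean_space set \<Rightarrow> 'g \<Rightarrow> 'g set" where
  "lie_algebra G e = tangent_space G e"

definition DL :: "('g::euclidean_space \<Rightarrow> 'g \<Rightarrow> 'g) \<Rightarrow> 'g \<Rightarrow> 'g \<Rightarrow> 'g \<Rightarrow> 'g" where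
  "DL mul e X U = frechet_derivative (\<lambda>Y. mul X Y) (at e) U"

definition DR :: "('g::euclidean_space \<Rightarrow> 'g \<Rightarrow> 'g) \<Rightarrow> 'g \<Rightarrow> 'g \<Rightarrow> 'g \<Rightarrow> 'g" where
  "DR mul e X U = frechet_derivative (\<lambda>Y. mul Y X) (at e) U"

definition Ad :: "('g::euclidean_space \<Rightarrow> 'g \<Rightarrow> 'g) \<Rightarrow> ('g \<Rightarrow> 'g) \<Rightarrow> 'g \<Rightarrow> 'g \<Rightarrow> 'g \<Rightarrow> 'g" where
  "Ad mul ginv e X U =
     frechet_derivative (\<lambda>Y. mul X Y) (at (ginv X)) (frechet_derivative (\<lambda>Y. mul Y (ginv X)) (at e) U)"

definition right_action :: "'g set \<Rightarrow> ('g \<Rightarrow> 'g \<Rightarrow> 'g) \<Rightarrow> 'g \<Rightarrow> 'm set \<Rightarrow> ('g \<Rightarrow> 'm \<Rightarrow> 'm) \<Rightarrow> bool" where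
  "right_action G mul e M phi \<longleftrightarrow>
     (\<forall>X\<in>G. \<forall>\<xi>\<in>M. phi X \<xi> \<in> M) \<and>
     (\<forall>X\<in>G. \<forall>Y\<in>G. \<forall>\<xi>\<in>M. phi Y (phi X \<xi>) = phi (mul X Y) \<xi>) \<and>
     (\<forall>\<xi>\<in>M. phi e \<xi> = \<xi>)"

end

theory Submission
  imports Defs
begin

(*
  Put Y = X^-1, so that the error is phi(Y, xi). Differentiating (Z X)^-1 = X^-1 Z^-1 and
  (X Z)^-1 = Z^-1 X^-1 at the identity shows Y' = - DL_Y (Ad_X Lam(phi(X, xi0), u) + Delta),
  and equivariance of the lift turns Ad_X Lam(phi(X, xi0), u) into Lam(xi0, psi(Y, u)).
  Since phi(Y E, xi) = phi(E, phi(Y, xi)), a variation DL_Y W of Y moves the error along the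
  orbit map E |-> phi(E, phi(Y, xi)). The variation of xi contributes
  D phi_Y f_u(xi) = f_psi(Y,u)(phi(Y, xi)), which the lift writes along the same orbit map
  as Lam(phi(Y, xi), psi(Y, u)).
*)

lemma smooth_imp_differentiable: "smooth f \<Longrightarrow> f differentiable (at x)"
  unfolding smooth_on_def by (metis empty_iff empty_set iter_pd.simps(1) subsetI UNIV_I)

lemma has_vector_derivative_compose_frechet:
  assumes "(\<gamma> has_vector_derivative v) (at t within S)" "F differentiable (at (\<gamma> t))"
  shows "((\<lambda>r. F (\<gamma> r)) has_vector_derivative frechet_derivative F (at (\<gamma> t)) v) (at t within S)"
  using vector_derivative_diff_chain_within[OF assms(1)
      has_derivative_at_withinI[OF assms(2)[unfolded frechet_derivative_works]]]
  by (simp add: o_def)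

lemma differentiable_compose_at:
  "g differentiable (at x) \<Longrightarrow> f differentiable (at (g x)) \<Longrightarrow> (\<lambda>z. f (g z)) differentiable (at x)"
  using differentiable_chain_at[of g x f] by (simp add: o_def)

lemma frechet_derivative_compose_apply:
  assumes "g differentiable (at x)" "f differentiable (at (g x))"
  shows "frechet_derivative (\<lambda>z. f (g z)) (at x) v
           = frechet_derivative f (at (g x)) (frechet_derivative g (at x) v)"
  using frechet_derivative_compose[OF assms] by (simp add: o_def)

lemma frechet_derivative_eq_on_tangent_space:
  assumes "F differentiable (at x)" "H differentiable (at x)" "\<And>z. z \<in> S \<Longrightarrow> F z = H z"
    and "v \<in> tangent_space S x"
  shows "frechet_derivative F (at x) v = frechet_derivative H (at x) v"
proof -
  obtain \<gamma> where \<gamma>: "\<And>t. \<gamma> t \<in> S" "\<gamma> 0 = x" "(\<gamma> has_vector_derivative v) (at 0)"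
    using assms(4) unfolding tangent_space_def by blast
  have "((\<lambda>r. F (\<gamma> r)) has_vector_derivative frechet_derivative F (at x) v) (at 0)"
    "((\<lambda>r. H (\<gamma> r)) has_vector_derivative frechet_derivative H (at x) v) (at 0)"
    using has_vector_derivative_compose_frechet[OF \<gamma>(3)] assms(1,2) \<gamma>(2) by simp_all
  moreover have "(\<lambda>r. F (\<gamma> r)) = (\<lambda>r. H (\<gamma> r))"
    using assms(3) \<gamma>(1) by auto
  ultimately show ?thesis
    using vector_derivative_unique_at by metis
qed

lemma frechet_derivative_in_tangent_space:
  assumes "F differentiable (at x)" "\<And>z. z \<in> S \<Longrightarrow> F z \<in> T" "v \<in> tangent_space S x"
  shows "frechet_derivative F (at x) v \<in> tangent_space T (F x)"
proof -
  obtain \<gamma> where \<gamma>: "\<And>t. \<gamma> t \<in> S" "\<gamma> 0 = x" "(\<gamma> has_vector_derivative v) (at 0)"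
    using assms(3) unfolding tangent_space_def by blast
  have "((\<lambda>r. F (\<gamma> r)) has_vector_derivative frechet_derivative F (at x) v) (at 0)"
    using has_vector_derivative_compose_frechet[OF \<gamma>(3)] assms(1) \<gamma>(2) by simp
  then show ?thesis
    unfolding tangent_space_def using \<gamma> assms(2) by (intro CollectI exI[of _ "\<lambda>r. F (\<gamma> r)"]) auto
qed

lemma linear_apply_pair: "linear L \<Longrightarrow> L (a, b) = L (a, 0) + L (0, b)"
  using linear_add[of L "(a, 0)" "(0, b)"] by simp

context
  fixes P :: "'a::euclidean_space \<Rightarrow> 'b::euclidean_space \<Rightarrow> 'c::real_normed_vector"
  assumes smooth_P: "smooth (\<lambda>p. P (fst p) (snd p))"
begin

lemma differentiable_smooth2:
  assumes "g1 differentiable (at x)" "g2 differentiable (at x)"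
  shows "(\<lambda>z. P (g1 z) (g2 z)) differentiable (at x)"
proof -
  have "(\<lambda>z. (g1 z, g2 z)) differentiable (at x)"
    using assms unfolding differentiable_def by (blast intro: has_derivative_Pair)
  then show ?thesis
    using differentiable_chain_at[of "\<lambda>z. (g1 z, g2 z)" x "\<lambda>p. P (fst p) (snd p)"]
      smooth_imp_differentiable[OF smooth_P] by (simp add: o_def)
qed

lemma frechet_derivative_smooth2:
  assumes "g1 differentiable (at x)" "g2 differentiable (at x)"
  shows "frechet_derivative (\<lambda>z. P (g1 z) (g2 z)) (at x) v =
    frechet_derivative (\<lambda>p. P (fst p) (snd p)) (at (g1 x, g2 x))
      (frechet_derivative g1 (at x) v, frechet_derivative g2 (at x) v)"
proof -
  have pair: "((\<lambda>z. (g1 z, g2 z)) has_derivative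
      (\<lambda>v. (frechet_derivative g1 (at x) v, frechet_derivative g2 (at x) v))) (at x)"
    using assms by (intro has_derivative_Pair) (simp_all add: frechet_derivative_works)
  then have "(\<lambda>z. (g1 z, g2 z)) differentiable (at x)"
    by (auto simp: differentiable_def)
  from frechet_derivative_compose_apply[OF this smooth_imp_differentiable[OF smooth_P]]
  show ?thesis
    by (simp add: frechet_derivative_at[OF pair, symmetric])
qed

lemma differentiable_smooth2_left: "(\<lambda>z. P z c) differentiable (at x)"
  using differentiable_smooth2[of "\<lambda>z. z" x "\<lambda>z. c"] by simp

lemma differentiable_smooth2_right: "(\<lambda>z. P c z) differentiable (at x)"
  using differentiable_smooth2[of "\<lambda>z. c" x "\<lambda>z. z"] by simp

lemma frechet_derivative_smooth2_left:
  "frechet_derivative (\<lambda>z. P z c) (at a) v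
     = frechet_derivative (\<lambda>p. P (fst p) (snd p)) (at (a, c)) (v, 0)"
  using frechet_derivative_smooth2[of "\<lambda>z. z" a "\<lambda>z. c" v] by simp

lemma frechet_derivative_smooth2_right:
  "frechet_derivative (\<lambda>z. P c z) (at a) v
     = frechet_derivative (\<lambda>p. P (fst p) (snd p)) (at (c, a)) (0, v)"
  using frechet_derivative_smooth2[of "\<lambda>z. c" a "\<lambda>z. z" v] by simp

end

locale embedded_lie_group =
  fixes G :: "'g::euclidean_space set" and mul :: "'g \<Rightarrow> 'g \<Rightarrow> 'g"
    and ginv :: "'g \<Rightarrow> 'g" and e :: 'g
  assumes lie_group: "lie_group G mul ginv e"
begin

lemma one_closed: "e \<in> G"
  and mul_closed: "X \<in> G \<Longrightarrow> Y \<in> G \<Longrightarrow> mul X Y \<in> G"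
  and inv_closed: "X \<in> G \<Longrightarrow> ginv X \<in> G"
  and mul_assoc: "X \<in> G \<Longrightarrow> Y \<in> G \<Longrightarrow> Z \<in> G \<Longrightarrow> mul (mul X Y) Z = mul X (mul Y Z)"
  and l_one: "X \<in> G \<Longrightarrow> mul e X = X"
  and r_one: "X \<in> G \<Longrightarrow> mul X e = X"
  and r_inv: "X \<in> G \<Longrightarrow> mul X (ginv X) = e"
  and l_inv: "X \<in> G \<Longrightarrow> mul (ginv X) X = e"
  and smooth_mul: "smooth (\<lambda>p. mul (fst p) (snd p))"
  and smooth_inv: "smooth ginv"
  using lie_group unfolding lie_group_def by auto

lemma inv_unique:
  assumes "X \<in> G" "Z \<in> G" "mul X Z = e"
  shows "ginv X = Z"
proof -
  have "ginv X = mul (ginv X) (mul X Z)"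
    using assms by (simp add: r_one inv_closed)
  also have "\<dots> = mul (mul (ginv X) X) Z"
    using assms(1,2) by (simp add: mul_assoc inv_closed)
  also have "\<dots> = Z"
    using assms by (simp add: l_inv l_one)
  finally show ?thesis .
qed

lemma inv_one: "ginv e = e"
  by (rule inv_unique) (simp_all add: one_closed l_one)

lemma inv_inv: "X \<in> G \<Longrightarrow> ginv (ginv X) = X"
  by (rule inv_unique) (simp_all add: inv_closed l_inv)

lemma mul_inv_cancel_left: "X \<in> G \<Longrightarrow> Z \<in> G \<Longrightarrow> mul X (mul (ginv X) Z) = Z"
  by (simp add: mul_assoc[symmetric] inv_closed r_inv l_one)

lemma inv_mul: "X \<in> G \<Longrightarrow> Y \<in> G \<Longrightarrow> ginv (mul X Y) = mul (ginv Y) (ginv X)"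
  by (rule inv_unique) (simp_all add: mul_closed inv_closed mul_assoc mul_inv_cancel_left r_inv)

lemma differentiable_mul_left: "(\<lambda>Z. mul A Z) differentiable (at x)"
  and differentiable_mul_right: "(\<lambda>Z. mul Z A) differentiable (at x)"
  and differentiable_inv: "ginv differentiable (at x)"
  by (simp_all add: differentiable_smooth2_right[OF smooth_mul]
      differentiable_smooth2_left[OF smooth_mul] smooth_imp_differentiable[OF smooth_inv])

lemma linear_DL: "linear (DL mul e Y)"
  and linear_DR: "linear (DR mul e Y)"
  unfolding DL_def DR_def
  by (simp_all add: linear_frechet_derivative differentiable_mul_left differentiable_mul_right)

lemma frechet_derivative_mul_at_one:
  assumes "V \<in> lie_algebra G e" "W \<in> lie_algebra G e"
  shows "frechet_derivative (\<lambda>p. mul (fst p) (snd p)) (at (e, e)) (V, W) = V + W"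
proof -
  let ?D = "frechet_derivative (\<lambda>p. mul (fst p) (snd p)) (at (e, e))"
  have "?D (V, 0) = frechet_derivative (\<lambda>Z. mul Z e) (at e) V"
    by (rule frechet_derivative_smooth2_left[OF smooth_mul, symmetric])
  also have "\<dots> = frechet_derivative (\<lambda>Z. Z) (at e) V"
    by (rule frechet_derivative_eq_on_tangent_space[where S = G])
      (use assms in \<open>simp_all add: lie_algebra_def differentiable_mul_right r_one\<close>)
  finally have V: "?D (V, 0) = V" by simp
  have "?D (0, W) = frechet_derivative (\<lambda>Z. mul e Z) (at e) W"
    by (rule frechet_derivative_smooth2_right[OF smooth_mul, symmetric])
  also have "\<dots> = frechet_derivative (\<lambda>Z. Z) (at e) W"
    by (rule frechet_derivative_eq_on_tangent_space[where S = G])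
      (use assms in \<open>simp_all add: lie_algebra_def differentiable_mul_left l_one\<close>)
  finally have W: "?D (0, W) = W" by simp
  show ?thesis
    using linear_apply_pair[OF linear_frechet_derivative[OF smooth_imp_differentiable[OF smooth_mul]],
        where a = V and b = W] V W by simp
qed

lemma frechet_derivative_inv_at_one:
  assumes W: "W \<in> lie_algebra G e"
  shows "frechet_derivative ginv (at e) W = - W"
proof -
  have W': "frechet_derivative ginv (at e) W \<in> lie_algebra G e"
    using frechet_derivative_in_tangent_space[OF differentiable_inv _ W[unfolded lie_algebra_def]]
    by (simp add: lie_algebra_def inv_closed inv_one)
  have "frechet_derivative (\<lambda>Z. mul Z (ginv Z)) (at e) W = frechet_derivative (\<lambda>Z. e) (at e) W"
    using W unfolding lie_algebra_def
    by (intro frechet_derivative_eq_on_tangent_space differentiable_smooth2[OF smooth_mul])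
      (simp_all add: differentiable_inv r_inv)
  then have "W + frechet_derivative ginv (at e) W = 0"
    using frechet_derivative_smooth2[OF smooth_mul, of "\<lambda>Z. Z" e ginv W]
    by (simp add: differentiable_inv inv_one frechet_derivative_mul_at_one[OF W W'])
  then show ?thesis
    by (simp add: eq_neg_iff_add_eq_0 add.commute)
qed


lemma frechet_derivative_inv_DR:
  assumes X: "X \<in> G" and W: "W \<in> lie_algebra G e"
  shows "frechet_derivative ginv (at X) (DR mul e X W) = - DL mul e (ginv X) W"
proof -
  have "frechet_derivative ginv (at X) (DR mul e X W)
      = frechet_derivative (\<lambda>Z. ginv (mul Z X)) (at e) W"
    unfolding DR_def
    using frechet_derivative_compose_apply[OF differentiable_mul_right differentiable_inv]
    by (simp add: l_one X)
  also have "\<dots> = frechet_derivative (\<lambda>Z. mul (ginv X) (ginv Z)) (at e) W"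
    using W unfolding lie_algebra_def
    by (intro frechet_derivative_eq_on_tangent_space[where S = G]
        differentiable_compose_at[OF differentiable_mul_right differentiable_inv]
        differentiable_compose_at[OF differentiable_inv differentiable_mul_left])
      (simp_all add: inv_mul X)
  also have "\<dots> = DL mul e (ginv X) (frechet_derivative ginv (at e) W)"
    unfolding DL_def
    using frechet_derivative_compose_apply[OF differentiable_inv differentiable_mul_left]
    by (simp add: inv_one)
  also have "\<dots> = - DL mul e (ginv X) W"
    by (simp add: frechet_derivative_inv_at_one W linear_neg[OF linear_DL])
  finally show ?thesis .
qed

lemma frechet_derivative_inv_DL:
  assumes X: "X \<in> G" and W: "W \<in> lie_algebra G e"
  shows "frechet_derivative ginv (at X) (DL mul e X W) = - DR mul e (ginv X) W"
proof -
  have "frechet_derivative ginv (at X) (DL mul e X W)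
      = frechet_derivative (\<lambda>Z. ginv (mul X Z)) (at e) W"
    unfolding DL_def
    using frechet_derivative_compose_apply[OF differentiable_mul_left differentiable_inv]
    by (simp add: r_one X)
  also have "\<dots> = frechet_derivative (\<lambda>Z. mul (ginv Z) (ginv X)) (at e) W"
    using W unfolding lie_algebra_def
    by (intro frechet_derivative_eq_on_tangent_space[where S = G]
        differentiable_compose_at[OF differentiable_mul_left differentiable_inv]
        differentiable_compose_at[OF differentiable_inv differentiable_mul_right])
      (simp_all add: inv_mul X)
  also have "\<dots> = DR mul e (ginv X) (frechet_derivative ginv (at e) W)"
    unfolding DR_def
    using frechet_derivative_compose_apply[OF differentiable_inv differentiable_mul_right]
    by (simp add: inv_one)
  also have "\<dots> = - DR mul e (ginv X) W"
    by (simp add: frechet_derivative_inv_at_one W linear_neg[OF linear_DR])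
  finally show ?thesis .
qed

lemma DL_inv_Ad:
  assumes X: "X \<in> G" and W: "W \<in> lie_algebra G e"
  shows "DL mul e (ginv X) (Ad mul ginv e X W) = DR mul e (ginv X) W"
proof -
  define V where "V = DR mul e (ginv X) W"
  have V: "V \<in> tangent_space G (ginv X)"
    using frechet_derivative_in_tangent_space[OF differentiable_mul_right[of "ginv X"],
        where S = G and T = G and v = W and x = e] W
    unfolding V_def DR_def lie_algebra_def by (simp add: mul_closed inv_closed X l_one)
  have "DL mul e (ginv X) (Ad mul ginv e X W)
      = frechet_derivative (\<lambda>Z. mul (ginv X) (mul X Z)) (at (ginv X)) V"
    unfolding DL_def Ad_def V_def DR_def
    using frechet_derivative_compose_apply[OF differentiable_mul_left differentiable_mul_left]
    by (simp add: r_inv X)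
  also have "\<dots> = frechet_derivative (\<lambda>Z. Z) (at (ginv X)) V"
    using V by (intro frechet_derivative_eq_on_tangent_space[where S = G]
        differentiable_compose_at[OF differentiable_mul_left differentiable_mul_left])
      (simp_all add: X mul_inv_cancel_left[of "ginv X", unfolded inv_inv[OF X]] inv_closed)
  finally show ?thesis
    unfolding V_def by simp
qed

lemma has_vector_derivative_inv_curve:
  assumes "X t \<in> G" "A \<in> lie_algebra G e" "B \<in> lie_algebra G e"
    and "(X has_vector_derivative DL mul e (X t) A + DR mul e (X t) B) (at t within S)"
  shows "((\<lambda>s. ginv (X s)) has_vector_derivative
           - DL mul e (ginv (X t)) (Ad mul ginv e (X t) A + B)) (at t within S)"
proof -
  have "frechet_derivative ginv (at (X t)) (DL mul e (X t) A + DR mul e (X t) B)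
      = - DL mul e (ginv (X t)) (Ad mul ginv e (X t) A + B)"
    using assms
    by (simp add: linear_add[OF linear_frechet_derivative[OF differentiable_inv]]
        frechet_derivative_inv_DL frechet_derivative_inv_DR DL_inv_Ad linear_add[OF linear_DL])
  then show ?thesis
    using has_vector_derivative_compose_frechet[OF assms(4) differentiable_inv] by simp
qed

end

locale smooth_right_action = embedded_lie_group G mul ginv e
  for G :: "'g::euclidean_space set" and mul ginv e +
  fixes M :: "'m::euclidean_space set" and phi :: "'g \<Rightarrow> 'm \<Rightarrow> 'm"
  assumes right_action: "right_action G mul e M phi"
    and smooth_action: "smooth (\<lambda>p. phi (fst p) (snd p))"
begin

lemma action_closed: "X \<in> G \<Longrightarrow> x \<in> M \<Longrightarrow> phi X x \<in> M"
  and action_mul: "X \<in> G \<Longrightarrow> Y \<in> G \<Longrightarrow> x \<in> M \<Longrightarrow> phi Y (phi X x) = phi (mul X Y) x"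
  and action_one: "x \<in> M \<Longrightarrow> phi e x = x"
  using right_action unfolding right_action_def by auto

text \<open>The two sides agree on the Lie algebra because the underlying maps agree on G;
linearity extends this to the span, needed because a tangent space as defined is not known to
be closed under addition.\<close>

lemma frechet_derivative_orbit_translate:
  assumes Y: "Y \<in> G" and x: "x \<in> M" and W: "W \<in> span (lie_algebra G e)"
  shows "frechet_derivative (\<lambda>E. phi E (phi Y x)) (at e) W
           = frechet_derivative (\<lambda>p. phi (fst p) (snd p)) (at (Y, x)) (DL mul e Y W, 0)"
proof -
  have "frechet_derivative (\<lambda>E. phi E (phi Y x)) (at e) W
      = frechet_derivative (\<lambda>E. phi (mul Y E) x) (at e) W"
  proof (rule linear_eq_on_span[OF _ _ _ W])
    fix V assume "V \<in> lie_algebra G e"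
    then show "frechet_derivative (\<lambda>E. phi E (phi Y x)) (at e) V
        = frechet_derivative (\<lambda>E. phi (mul Y E) x) (at e) V"
      unfolding lie_algebra_def
      by (intro frechet_derivative_eq_on_tangent_space[where S = G])
        (simp_all add: differentiable_smooth2_left[OF smooth_action]
          differentiable_smooth2[OF smooth_action] differentiable_mul_left action_mul Y x)
  qed (simp_all add: linear_frechet_derivative differentiable_smooth2_left[OF smooth_action]
      differentiable_smooth2[OF smooth_action] differentiable_mul_left)
  also have "\<dots> = frechet_derivative (\<lambda>p. phi (fst p) (snd p)) (at (Y, x)) (DL mul e Y W, 0)"
    using frechet_derivative_smooth2[OF smooth_action, of "mul Y" e "\<lambda>E. x" W]
    by (simp add: differentiable_mul_left r_one Y DL_def)
  finally show ?thesis .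
qed

lemma has_vector_derivative_action_curve:
  assumes Y: "Y t \<in> G" and \<xi>: "\<xi> t \<in> M" and V: "V \<in> span (lie_algebra G e)"
    and dY: "(Y has_vector_derivative - DL mul e (Y t) V) (at t within S)"
    and d\<xi>: "(\<xi> has_vector_derivative v) (at t within S)"
  shows "((\<lambda>s. phi (Y s) (\<xi> s)) has_vector_derivative
           frechet_derivative (phi (Y t)) (at (\<xi> t)) v
           - frechet_derivative (\<lambda>E. phi E (phi (Y t) (\<xi> t))) (at e) V) (at t within S)"
proof -
  let ?DP = "frechet_derivative (\<lambda>p. phi (fst p) (snd p)) (at (Y t, \<xi> t))"
  have lin: "linear ?DP"
    by (rule linear_frechet_derivative[OF smooth_imp_differentiable[OF smooth_action]])
  have "((\<lambda>s. phi (Y s) (\<xi> s)) has_vector_derivative ?DP (- DL mul e (Y t) V, v)) (at t within S)"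
    using has_vector_derivative_compose_frechet[OF has_vector_derivative_Pair[OF dY d\<xi>]
        smooth_imp_differentiable[OF smooth_action]] by simp
  moreover have "?DP (- DL mul e (Y t) V, v) = ?DP (0, v) - ?DP (DL mul e (Y t) V, 0)"
    using linear_apply_pair[OF lin, where a = "- DL mul e (Y t) V" and b = v]
      linear_neg[OF lin, of "(DL mul e (Y t) V, 0)"] by simp
  ultimately show ?thesis
    by (simp add: frechet_derivative_smooth2_right[OF smooth_action]
        frechet_derivative_orbit_translate[OF Y \<xi> V])
qed

end

theorem mainTheorem2:
  fixes G :: "'g::euclidean_space set" and mul :: "'g \<Rightarrow> 'g \<Rightarrow> 'g"
    and ginv :: "'g \<Rightarrow> 'g" and e :: 'g
    and M :: "'m::euclidean_space set" and m :: nat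
    and phi :: "'g \<Rightarrow> 'm \<Rightarrow> 'm"
    and psi :: "'g \<Rightarrow> 'l::euclidean_space \<Rightarrow> 'l"
    and f :: "'l \<Rightarrow> 'm \<Rightarrow> 'm"
    and Lam :: "'m \<Rightarrow> 'l \<Rightarrow> 'g"
    and u :: "real \<Rightarrow> 'l" and \<xi> :: "real \<Rightarrow> 'm" and \<xi>0 :: 'm
    and \<Delta> :: "real \<Rightarrow> 'g" and Xh :: "real \<Rightarrow> 'g"
  assumes G: "lie_group G mul ginv e"
    and M: "embedded_submanifold m M"
    and phi_act: "right_action G mul e M phi"
    and phi_smooth: "smooth (\<lambda>p. phi (fst p) (snd p))"
    and phi_trans: "\<forall>\<eta>\<in>M. \<forall>\<zeta>\<in>M. \<exists>X\<in>G. phi X \<eta> = \<zeta>"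
    and f_field: "\<forall>v. (\<exists>F. smooth F \<and> (\<forall>x\<in>M. F x = f v x)) \<and> (\<forall>x\<in>M. f v x \<in> tangent_space M x)"
    and f_affine: "\<exists>f0 A. (\<forall>v. \<forall>x\<in>M. f v x = f0 x + A x v) \<and> (\<forall>x. linear (A x))"
    and psi_act: "right_action G mul e UNIV psi"
    and psi_smooth: "smooth (\<lambda>p. psi (fst p) (snd p))"
    and equiv: "\<forall>X\<in>G. \<forall>x\<in>M. \<forall>v.
                  frechet_derivative (phi X) (at x) (f v x) = f (psi X v) (phi X x)"
    and Lam_smooth: "smooth (\<lambda>p. Lam (fst p) (snd p))"
    and Lam_alg: "\<forall>x\<in>M. \<forall>v. Lam x v \<in> lie_algebra G e"
    and Lam_lift: "\<forall>x\<in>M. \<forall>v. frechet_derivative (\<lambda>X. phi X x) (at e) (Lam x v) = f v x"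
    and Lam_equiv: "\<forall>X\<in>G. \<forall>x\<in>M. \<forall>v. Lam (phi X x) (psi X v) = Ad mul ginv e (ginv X) (Lam x v)"
    and traj_in: "\<forall>t\<ge>0. \<xi> t \<in> M"
    and traj: "\<forall>t\<ge>0. (\<xi> has_vector_derivative f (u t) (\<xi> t)) (at t within {0..})"
    and xi0: "\<xi>0 \<in> M"
    and Delta_alg: "\<forall>t\<ge>0. \<Delta> t \<in> lie_algebra G e"
    and Xh_in: "\<forall>t\<ge>0. Xh t \<in> G"
    and Xh_init: "Xh 0 = e"
    and Xh_ode: "\<forall>t\<ge>0. (Xh has_vector_derivative
                   DL mul e (Xh t) (Lam (phi (Xh t) \<xi>0) (u t)) + DR mul e (Xh t) (\<Delta> t))
                   (at t within {0..})"
  shows "\<forall>t\<ge>0. ((\<lambda>s. phi (ginv (Xh s)) (\<xi> s)) has_vector_derivative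
            frechet_derivative (\<lambda>E. phi E (phi (ginv (Xh t)) (\<xi> t))) (at e)
              (Lam (phi (ginv (Xh t)) (\<xi> t)) (psi (ginv (Xh t)) (u t))
               - Lam \<xi>0 (psi (ginv (Xh t)) (u t)) - \<Delta> t))
          (at t within {0..})"
proof (intro allI impI)
  fix t :: real assume t: "t \<ge> 0"
  interpret smooth_right_action G mul ginv e M phi
    by unfold_locales (fact G phi_act phi_smooth)+
  define X where "X = Xh t"
  define Y where "Y = ginv X"
  define u_origin where "u_origin = psi Y (u t)"
  define err where "err = phi Y (\<xi> t)"
  let ?orbit = "frechet_derivative (\<lambda>E. phi E err) (at e)"
  have X: "X \<in> G" and Y: "Y \<in> G" and \<xi>t: "\<xi> t \<in> M" and err: "err \<in> M"
    using Xh_in traj_in t by (auto simp: X_def Y_def err_def inv_closed action_closed)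
  have "Lam (phi Y (phi X \<xi>0)) u_origin = Ad mul ginv e (ginv Y) (Lam (phi X \<xi>0) (u t))"
    using Lam_equiv Y action_closed[OF X xi0] by (simp add: u_origin_def)
  then have "Ad mul ginv e X (Lam (phi X \<xi>0) (u t)) = Lam \<xi>0 u_origin"
    using action_mul[OF X Y xi0] action_one[OF xi0] by (simp add: Y_def r_inv inv_inv X)
  then have dY: "((\<lambda>s. ginv (Xh s)) has_vector_derivative - DL mul e Y (Lam \<xi>0 u_origin + \<Delta> t))
      (at t within {0..})"
    using has_vector_derivative_inv_curve[of Xh t, OF _ _ _ Xh_ode[rule_format, OF t]]
      X Lam_alg action_closed[OF X xi0] Delta_alg t by (simp add: X_def Y_def)
  have "Lam \<xi>0 u_origin + \<Delta> t \<in> span (lie_algebra G e)"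
    using Lam_alg xi0 Delta_alg t by (simp add: span_add span_base)
  from has_vector_derivative_action_curve[OF _ _ this _ traj[rule_format, OF t], of "\<lambda>s. ginv (Xh s)"]
  have "((\<lambda>s. phi (ginv (Xh s)) (\<xi> s)) has_vector_derivative
      frechet_derivative (phi Y) (at (\<xi> t)) (f (u t) (\<xi> t)) - ?orbit (Lam \<xi>0 u_origin + \<Delta> t))
      (at t within {0..})"
    using Y \<xi>t dY by (simp add: X_def Y_def err_def)
  moreover have "frechet_derivative (phi Y) (at (\<xi> t)) (f (u t) (\<xi> t)) = ?orbit (Lam err u_origin)"
    using equiv Y \<xi>t Lam_lift err by (simp add: u_origin_def err_def)
  moreover have "linear ?orbit"
    by (rule linear_frechet_derivative[OF differentiable_smooth2_left[OF phi_smooth]])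
  ultimately show "((\<lambda>s. phi (ginv (Xh s)) (\<xi> s)) has_vector_derivative
      frechet_derivative (\<lambda>E. phi E (phi (ginv (Xh t)) (\<xi> t))) (at e)
        (Lam (phi (ginv (Xh t)) (\<xi> t)) (psi (ginv (Xh t)) (u t))
         - Lam \<xi>0 (psi (ginv (Xh t)) (u t)) - \<Delta> t)) (at t within {0..})"
    by (simp add: linear_diff linear_add diff_diff_eq X_def Y_def u_origin_def err_def)
qed

end
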